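(* Let $f: \mathbb{R}^n \to \mathbb{R}^n$ be a convex topical function. Then $\mathcal{G}(f)$ is identical to the syntactic graph $\mathcal{G}_s(f)$.
   Context: $f$ is topical if $f(x+h) = f(x)+h$ for all $h\in\mathbb{R}$ (scalar added to each coordinate) and $x\le y$ componentwise implies $f(x)\le f(y)$. $f$ is convex if each component $f_i$ is convex. $\mathcal{G}(f)$ is the directed graph on $\{1,\dots,n\}$ with an edge $i\to j$ iff $\lim_{u\to\infty} f_i(u e_{\{j\}}) = \infty$, $e_{\{j\}}$ being the $j$-th standard basis vector. $\mathcal{G}_s(f)$ is the directed graph on $\{1,\dots,n\}$ with an edge $i\to j$ iff $f_i$ depends on $x_j$, i.e. there is no $h: \mathbb{R}^{n-1}\to\mathbb{R}$ with $f_i(x) = h(x_1,\dots,x_{j-1},x_{j+1},\dots,x_n)$ for all $x$. *)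

theory Defs
  imports "HOL-Analysis.Analysis" "HOL-Library.FuncSet"
begin

definition topical :: "(real^'n \<Rightarrow> real^'n) \<Rightarrow> bool" where
  "topical f \<longleftrightarrow>
     (\<forall>x h. f (x + (\<chi> i. h)) = f x + (\<chi> i. h)) \<and>
     (\<forall>x y. (\<forall>i. x $ i \<le> y $ i) \<longrightarrow> (\<forall>i. f x $ i \<le> f y $ i))"

definition convex_map :: "(real^'n \<Rightarrow> real^'n) \<Rightarrow> bool" where
  "convex_map f \<longleftrightarrow> (\<forall>i. convex_on UNIV (\<lambda>x. f x $ i))"

definition graph_G :: "(real^'n \<Rightarrow> real^'n) \<Rightarrow> ('n \<times> 'n) set" where
  "graph_G f = {(i, j). filterlim (\<lambda>u::real. f (u *\<^sub>R axis j 1) $ i) at_top at_top}"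

text \<open>Edge set of the syntactic graph G_s(f): (i,j) is an edge iff f_i depends on x_j,
  i.e. f_i is not a function of the remaining coordinates (x_k)_{k \<noteq> j}.\<close>
definition graph_Gs :: "(real^'n \<Rightarrow> real^'n) \<Rightarrow> ('n \<times> 'n) set" where
  "graph_Gs f = {(i, j). \<not> (\<exists>h :: ('n \<Rightarrow> real) \<Rightarrow> real.
        \<forall>x. f x $ i = h (restrict (\<lambda>k. x $ k) (- {j})))}"

end

theory Submission
  imports Defs
begin

text \<open>An edge of \<open>\<G>(f)\<close> is always an edge of \<open>\<G>\<^sub>s(f)\<close>, since a coordinate \<open>f\<^sub>i\<close> independent
  of \<open>x\<^sub>j\<close> is constant along the \<open>j\<close>-th axis. Conversely, if \<open>f\<^sub>i(u e\<^sub>j)\<close> does not tend to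
  \<open>\<infinity>\<close>, monotonicity bounds it above on the whole axis, and topicality transfers the bound to
  every parallel line: \<open>f\<^sub>i(x + u e\<^sub>j) \<le> f\<^sub>i(u e\<^sub>j) + \<parallel>x\<parallel>\<close>. A convex function of one real
  variable that is bounded above is constant, so \<open>f\<^sub>i\<close> does not depend on \<open>x\<^sub>j\<close>.\<close>

lemma mono_bounded_if_not_filterlim_at_top:
  fixes \<phi> :: "'a::linorder \<Rightarrow> 'b::linorder"
  assumes "mono \<phi>" and "\<not> filterlim \<phi> at_top at_top"
  obtains M where "\<And>u. \<phi> u \<le> M"
proof -
  from assms(2) obtain Z where not_eventually: "\<not> eventually (\<lambda>u. Z \<le> \<phi> u) at_top"
    unfolding filterlim_at_top by auto
  have "\<phi> u \<le> Z" for u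
  proof (rule ccontr)
    assume "\<not> \<phi> u \<le> Z"
    then have "\<forall>v\<ge>u. Z \<le> \<phi> v"
      using \<open>mono \<phi>\<close> by (meson monoD order.trans nle_le)
    with not_eventually show False
      by (auto simp: eventually_at_top_linorder)
  qed
  then show thesis by (rule that)
qed

lemma convex_on_line:
  fixes g :: "'a::real_vector \<Rightarrow> real"
  assumes "convex_on UNIV g"
  shows "convex_on UNIV (\<lambda>t. g (x + t *\<^sub>R v))"
proof (rule convex_onI)
  fix t a b :: real
  assume t: "0 < t" "t < 1"
  have "x + ((1 - t) *\<^sub>R a + t *\<^sub>R b) *\<^sub>R v = (1 - t) *\<^sub>R (x + a *\<^sub>R v) + t *\<^sub>R (x + b *\<^sub>R v)"
    by (simp add: algebra_simps)
  then show "g (x + ((1 - t) *\<^sub>R a + t *\<^sub>R b) *\<^sub>R v)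
      \<le> (1 - t) * g (x + a *\<^sub>R v) + t * g (x + b *\<^sub>R v)"
    using convex_onD[OF assms, of t "x + a *\<^sub>R v" "x + b *\<^sub>R v"] t by simp
qed simp

lemma convex_bounded_above_antimono:
  fixes \<phi> :: "real \<Rightarrow> real"
  assumes convex: "convex_on UNIV \<phi>" and bounded: "\<And>u. \<phi> u \<le> M" and "a \<le> b"
  shows "\<phi> b \<le> \<phi> a"
proof (rule ccontr)
  assume "\<not> \<phi> b \<le> \<phi> a"
  with \<open>a \<le> b\<close> have "a < b" and "\<phi> a < \<phi> b" by (auto simp: order.order_iff_strict)
  define s where "s = (\<phi> b - \<phi> a) / (b - a)"
  have "s > 0" using \<open>a < b\<close> \<open>\<phi> a < \<phi> b\<close> by (simp add: s_def)
  \<comment> \<open>beyond \<open>b\<close> the graph lies above the chord through \<open>a\<close> and \<open>b\<close>, which exceeds \<open>M\<close> at \<open>u\<close>\<close>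
  define u where "u = b + (M - \<phi> b + 1) / s"
  have "b < u" using \<open>s > 0\<close> bounded[of b] by (simp add: u_def)
  have "(\<phi> a - \<phi> b) / (a - b) \<le> (\<phi> a - \<phi> u) / (a - u)"
    using convex_on_slope_le(1)[OF convex _ _ \<open>a < b\<close> \<open>b < u\<close>] by simp
  then have "s \<le> (\<phi> u - \<phi> a) / (u - a)"
    unfolding s_def by (metis minus_diff_eq minus_divide_divide)
  then have "\<phi> a + s * (u - a) \<le> \<phi> u"
    using \<open>b < u\<close> \<open>a < b\<close> by (simp add: field_simps)
  moreover have "s * (b - a) = \<phi> b - \<phi> a"
    using \<open>a < b\<close> by (simp add: s_def)
  moreover have "s * (u - b) = M - \<phi> b + 1"
    using \<open>s > 0\<close> by (simp add: u_def)
  moreover have "s * (u - a) = s * (u - b) + s * (b - a)"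
    by (simp add: algebra_simps)
  ultimately show False
    using bounded[of u] by linarith
qed

lemma convex_bounded_above_const:
  fixes \<phi> :: "real \<Rightarrow> real"
  assumes "convex_on UNIV \<phi>" and "\<And>u. \<phi> u \<le> M"
  shows "\<phi> a = \<phi> b"
proof -
  have "convex_on UNIV (\<lambda>t. \<phi> (- t))"
    using convex_on_line[OF assms(1), of 0 "- 1"] by simp
  then have nondecreasing: "\<phi> c \<le> \<phi> d" if "c \<le> d" for c d
    using convex_bounded_above_antimono[of "\<lambda>t. \<phi> (- t)" M "- d" "- c"] assms(2) that by simp
  show ?thesis
    using convex_bounded_above_antimono[OF assms] nondecreasing
    by (metis linorder_linear order_antisym)
qed

lemma topical_le_add_norm:
  assumes "topical f"
  shows "f (x + y) $ i \<le> f y $ i + norm x"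
proof -
  have "\<forall>k. (x + y) $ k \<le> (y + (\<chi> k. norm x)) $ k"
    using component_le_norm_cart[of x] by (simp add: abs_le_iff)
  then have "f (x + y) $ i \<le> f (y + (\<chi> k. norm x)) $ i"
    using assms unfolding topical_def by blast
  also have "\<dots> = f y $ i + norm x"
    using assms unfolding topical_def by simp
  finally show ?thesis .
qed

lemma topical_mono_along_axis:
  assumes "topical f"
  shows "mono (\<lambda>t. f (x + t *\<^sub>R axis j 1) $ i)"
proof (rule monoI)
  fix s t :: real
  assume "s \<le> t"
  then have "\<forall>k. (x + s *\<^sub>R axis j 1) $ k \<le> (x + t *\<^sub>R axis j 1) $ k"
    by (simp add: axis_def)
  then show "f (x + s *\<^sub>R axis j 1) $ i \<le> f (x + t *\<^sub>R axis j 1) $ i"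
    using assms unfolding topical_def by blast
qed

lemma notin_graph_Gs_iff:
  fixes f :: "real^'n \<Rightarrow> real^'n"
  shows "(i, j) \<notin> graph_Gs f \<longleftrightarrow> (\<forall>x (t::real). f (x + t *\<^sub>R axis j 1) $ i = f x $ i)"
proof
  assume "(i, j) \<notin> graph_Gs f"
  then obtain h where h: "\<And>x. f x $ i = h (restrict (\<lambda>k. x $ k) (- {j}))"
    unfolding graph_Gs_def by blast
  show "\<forall>x (t::real). f (x + t *\<^sub>R axis j 1) $ i = f x $ i"
  proof (intro allI)
    fix x :: "real^'n" and t :: real
    have "restrict (\<lambda>k. (x + t *\<^sub>R axis j 1) $ k) (- {j}) = restrict (\<lambda>k. x $ k) (- {j})"
      by (auto simp: restrict_def axis_def)
    then show "f (x + t *\<^sub>R axis j 1) $ i = f x $ i" by (simp add: h)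
  qed
next
  assume invariant: "\<forall>x (t::real). f (x + t *\<^sub>R axis j 1) $ i = f x $ i"
  define h where "h r = f (\<chi> k. if k = j then 0 else r k) $ i" for r :: "'n \<Rightarrow> real"
  have "f x $ i = h (restrict (\<lambda>k. x $ k) (- {j}))" for x
  proof -
    have "x = (\<chi> k. if k = j then 0 else restrict (\<lambda>k. x $ k) (- {j}) k) + (x $ j) *\<^sub>R axis j 1"
      by (simp add: vec_eq_iff axis_def)
    then show ?thesis unfolding h_def by (metis invariant)
  qed
  then show "(i, j) \<notin> graph_Gs f" unfolding graph_Gs_def by blast
qed

lemma graph_G_subset_graph_Gs: "graph_G f \<subseteq> graph_Gs f"
proof (rule subrelI)
  fix i j
  assume "(i, j) \<in> graph_G f"
  show "(i, j) \<in> graph_Gs f"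
  proof (rule ccontr)
    assume "(i, j) \<notin> graph_Gs f"
    then have "f (u *\<^sub>R axis j 1) $ i = f 0 $ i" for u
      unfolding notin_graph_Gs_iff by (metis add_0)
    with \<open>(i, j) \<in> graph_G f\<close> have "filterlim (\<lambda>u::real. f 0 $ i) at_top at_top"
      unfolding graph_G_def by simp
    then show False
      by (simp add: filterlim_at_top eventually_at_top_linorder) (meson gt_ex leD order.refl)
  qed
qed

lemma graph_Gs_subset_graph_G:
  assumes "topical f" and "convex_map f"
  shows "graph_Gs f \<subseteq> graph_G f"
proof (rule subrelI)
  fix i j
  assume "(i, j) \<in> graph_Gs f"
  show "(i, j) \<in> graph_G f"
  proof (rule ccontr)
    assume "(i, j) \<notin> graph_G f"
    then have "\<not> filterlim (\<lambda>u. f (0 + u *\<^sub>R axis j 1) $ i) at_top at_top"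
      unfolding graph_G_def by simp
    with topical_mono_along_axis[OF assms(1)]
    obtain M where "\<And>u. f (0 + u *\<^sub>R axis j 1) $ i \<le> M"
      by (rule mono_bounded_if_not_filterlim_at_top) blast
    then have on_axis: "\<And>u. f (u *\<^sub>R axis j 1) $ i \<le> M"
      by simp
    have "f (x + t *\<^sub>R axis j 1) $ i = f (x + 0 *\<^sub>R axis j 1) $ i" for x t
    proof (rule convex_bounded_above_const[where \<phi> = "\<lambda>u. f (x + u *\<^sub>R axis j 1) $ i"])
      show "convex_on UNIV (\<lambda>u. f (x + u *\<^sub>R axis j 1) $ i)"
        using assms(2) convex_on_line[of "\<lambda>y. f y $ i"] unfolding convex_map_def by blast
      show "f (x + u *\<^sub>R axis j 1) $ i \<le> M + norm x" for u
        using topical_le_add_norm[OF assms(1), of x "u *\<^sub>R axis j 1" i] on_axis[of u]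
        by linarith
    qed
    then have "(i, j) \<notin> graph_Gs f"
      unfolding notin_graph_Gs_iff by simp
    with \<open>(i, j) \<in> graph_Gs f\<close> show False by blast
  qed
qed

theorem proposition3p3:
  fixes f :: "real^'n \<Rightarrow> real^'n"
  assumes "topical f" and "convex_map f"
  shows "graph_G f = graph_Gs f"
  using graph_G_subset_graph_Gs graph_Gs_subset_graph_G[OF assms] by (rule subset_antisym)

end
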